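(* Let $k \geq 3$ and $n \geq 2k - 4$ be integers, and let $H$ be an $n$-vertex $k$-graph with $\delta_{k-1}(H) > n/3$ and a vertex partition $\{A, B\}$ of $V(H)$ with $|A|, |B| > 0$. Suppose that $H$ contains no $(A,B)$-diamond. Then $H$ contains a proto-balancer.
   Context: $\delta_{k-1}(H)$ is the minimum over $(k-1)$-subsets of $V(H)$ of the number of edges containing it. For $x,y \in V(H)$, an $(x,y)$-diamond is a pair of edges $e,f$ with $|e\cap f| = k-1$, $x \in e \setminus f$, $y \in f \setminus e$; an $(A,B)$-diamond is an $(x,y)$-diamond with $x \in A$, $y \in B$. An $(A,B)$-proto-balancer in $H$ is given by a $(k-3)$-set $S \subseteq V(H)$ and three $3$-sets $X_1, X_2, X_3 \subseteq V(H)\setminus S$ such that: $S \cup X_i \in E(H)$ for all $i \in [3]$; $|X_1 \cap A| = |X_2 \cap A| = |X_1 \cap X_2| = |X_1 \cap X_2 \cap A| = 2$; $|X_3 \cap A| = 0$; and $|X_1 \cap X_3| = |X_2 \cap X_3| = 1$ (the proto-balancer is the subgraph with edges $S\cup X_1, S \cup X_2, S\cup X_3$). A $(B,A)$-proto-balancer is defined in the same way with the roles of $A$ and $B$ exchanged. A proto-balancer is an $(A,B)$-proto-balancer or a $(B,A)$-proto-balancer. *)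

theory Defs
  imports Complex_Main
begin

definition kgraph :: "nat \<Rightarrow> 'a set \<Rightarrow> 'a set set \<Rightarrow> bool" where
  "kgraph k V E \<longleftrightarrow> finite V \<and> (\<forall>e\<in>E. e \<subseteq> V \<and> card e = k)"

definition deg :: "'a set set \<Rightarrow> 'a set \<Rightarrow> nat" where
  "deg E S = card {e\<in>E. S \<subseteq> e}"

definition min_codeg :: "nat \<Rightarrow> 'a set \<Rightarrow> 'a set set \<Rightarrow> nat" where
  "min_codeg k V E = Min ((deg E) ` {S. S \<subseteq> V \<and> card S = k - 1})"

definition diamond :: "nat \<Rightarrow> 'a set set \<Rightarrow> 'a \<Rightarrow> 'a \<Rightarrow> 'a set \<Rightarrow> 'a set \<Rightarrow> bool" where
  "diamond k E x y e f \<longleftrightarrow> e \<in> E \<and> f \<in> E \<and> card (e \<inter> f) = k - 1 \<and>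
     x \<in> e - f \<and> y \<in> f - e"

definition has_AB_diamond :: "nat \<Rightarrow> 'a set set \<Rightarrow> 'a set \<Rightarrow> 'a set \<Rightarrow> bool" where
  "has_AB_diamond k E A B \<longleftrightarrow> (\<exists>x\<in>A. \<exists>y\<in>B. \<exists>e f. diamond k E x y e f)"

definition is_AB_proto_balancer ::
  "nat \<Rightarrow> 'a set \<Rightarrow> 'a set set \<Rightarrow> 'a set \<Rightarrow> 'a set \<Rightarrow> 'a set \<Rightarrow> 'a set \<Rightarrow> 'a set \<Rightarrow> bool" where
  "is_AB_proto_balancer k V E A S X1 X2 X3 \<longleftrightarrow>
     S \<subseteq> V \<and> card S = k - 3 \<and>
     (\<forall>X\<in>{X1, X2, X3}. X \<subseteq> V - S \<and> card X = 3 \<and> S \<union> X \<in> E) \<and>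
     card (X1 \<inter> A) = 2 \<and> card (X2 \<inter> A) = 2 \<and> card (X1 \<inter> X2) = 2 \<and>
     card (X1 \<inter> X2 \<inter> A) = 2 \<and> card (X3 \<inter> A) = 0 \<and>
     card (X1 \<inter> X3) = 1 \<and> card (X2 \<inter> X3) = 1"

definition has_proto_balancer :: "nat \<Rightarrow> 'a set \<Rightarrow> 'a set set \<Rightarrow> 'a set \<Rightarrow> 'a set \<Rightarrow> bool" where
  "has_proto_balancer k V E A B \<longleftrightarrow>
     (\<exists>S X1 X2 X3. is_AB_proto_balancer k V E A S X1 X2 X3 \<or>
                    is_AB_proto_balancer k V E B S X1 X2 X3)"

end

theory Submission
  imports Defs
begin

(*
  Write N(T) for the set of vertices completing a (k-1)-set T to an edge. Without an
  (A,B)-diamond every N(T) lies entirely in A or entirely in B, and the codegree condition gives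
  |N(T)| > n/3, so no three (k-1)-sets have pairwise disjoint neighbourhoods.

  Any (k-1)-set meeting both sides has a neighbour, so some edge S + {a, a', b1} has two vertices
  in A and one in B (the other case is symmetric and yields a (B,A)-proto-balancer). N(S + a + a')
  contains b1, hence lies in B, and it contains a second vertex b2. Take v in N(S + b1 + b2).
  If v is in B, the edges through {a, a', b1}, {a, a', b2}, {b1, b2, v} form a proto-balancer.
  If v were in A, then N(S + a + b1) (containing a') and N(S + b1 + b2) (containing v) lie in A,
  N(S + b1 + v) (containing b2) lies in B, and the first two are disjoint, since a common
  neighbour y would give S + b1 + y the neighbours a and b2 on different sides: three disjoint
  neighbourhoods, which is impossible.
*)

definition nbhd :: "'a set set \<Rightarrow> 'a set \<Rightarrow> 'a set" where
  "nbhd E T = {v. v \<notin> T \<and> insert v T \<in> E}"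

lemma nbhd_swap:
  assumes "x \<notin> T" and "y \<in> nbhd E (insert x T)"
  shows "x \<in> nbhd E (insert y T)"
  using assms by (auto simp: nbhd_def insert_commute)

lemma insert_nbhd_subset:
  assumes "kgraph k V E" and "x \<in> nbhd E T"
  shows "insert x T \<subseteq> V"
  using assms by (auto simp: kgraph_def nbhd_def)

lemma nbhd_subset:
  assumes "kgraph k V E"
  shows "nbhd E T \<subseteq> V"
  using assms by (auto simp: kgraph_def nbhd_def)

lemma card_nbhd_eq_deg:
  assumes kg: "kgraph k V E" and "finite T" and card_T: "card T = k - 1" and "k \<ge> 1"
  shows "card (nbhd E T) = deg E T"
proof -
  have "bij_betw (\<lambda>v. insert v T) (nbhd E T) {e\<in>E. T \<subseteq> e}"
  proof (rule bij_betwI')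
    fix e assume e: "e \<in> {e\<in>E. T \<subseteq> e}"
    then have "card e = k" using kg by (auto simp: kgraph_def)
    then have "card (e - T) = 1"
      using e card_T \<open>finite T\<close> \<open>k \<ge> 1\<close> by (auto simp: card_Diff_subset)
    then obtain v where "e - T = {v}" by (rule card_1_singletonE)
    then have "v \<notin> T" "e = insert v T" using e by auto
    with e show "\<exists>v\<in>nbhd E T. e = insert v T" by (auto simp: nbhd_def)
  qed (auto simp: nbhd_def)
  then show ?thesis by (simp add: deg_def bij_betw_same_card)
qed

lemma min_codeg_le_card_nbhd:
  assumes kg: "kgraph k V E" and "T \<subseteq> V" and "card T = k - 1" and "k \<ge> 1"
  shows "min_codeg k V E \<le> card (nbhd E T)"
proof -
  have "finite V" using kg by (simp add: kgraph_def)
  then have "finite {S. S \<subseteq> V \<and> card S = k - 1}" by simp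
  then have "min_codeg k V E \<le> deg E T"
    unfolding min_codeg_def using assms(2,3) by (intro Min_le) auto
  also have "\<dots> = card (nbhd E T)"
    using assms \<open>finite V\<close> by (simp add: card_nbhd_eq_deg finite_subset)
  finally show ?thesis .
qed

lemma not_three_disjoint_nbhds:
  assumes kg: "kgraph k V E" and "k \<ge> 1" and "card V = n"
    and codeg: "real (min_codeg k V E) > real n / 3"
    and T: "\<forall>T\<in>{T1, T2, T3}. T \<subseteq> V \<and> card T = k - 1"
    and disj: "nbhd E T1 \<inter> nbhd E T2 = {}" "nbhd E T1 \<inter> nbhd E T3 = {}" "nbhd E T2 \<inter> nbhd E T3 = {}"
  shows False
proof -
  have "finite V" using kg by (simp add: kgraph_def)
  have fin: "finite (nbhd E T)" for T
    using finite_subset[OF nbhd_subset[OF kg] \<open>finite V\<close>] .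
  have codeg_le: "min_codeg k V E \<le> card (nbhd E T)" if "T \<in> {T1, T2, T3}" for T
    using T that by (intro min_codeg_le_card_nbhd[OF kg _ _ \<open>k \<ge> 1\<close>]) auto
  have "3 * min_codeg k V E \<le> card (nbhd E T1) + card (nbhd E T2) + card (nbhd E T3)"
    using codeg_le[of T1] codeg_le[of T2] codeg_le[of T3] by simp
  also have "\<dots> = card (nbhd E T1 \<union> nbhd E T2 \<union> nbhd E T3)"
    using disj fin by (simp add: card_Un_disjoint Int_Un_distrib2)
  also have "\<dots> \<le> n"
    using card_mono[OF \<open>finite V\<close>] nbhd_subset[OF kg] \<open>card V = n\<close> by (metis Un_least)
  finally have "3 * min_codeg k V E \<le> n" .
  then show False using codeg by linarith
qed

lemma diamond_commute: "diamond k E x y e f \<longleftrightarrow> diamond k E y x f e"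
  by (auto simp: diamond_def Int_commute)

lemma has_AB_diamond_commute: "has_AB_diamond k E A B \<longleftrightarrow> has_AB_diamond k E B A"
  unfolding has_AB_diamond_def by (meson diamond_commute)

lemma nbhd_not_mixed:
  assumes "\<not> has_AB_diamond k E A B" and "card T = k - 1"
    and "x \<in> nbhd E T" "y \<in> nbhd E T" "x \<in> A" "y \<in> B" "x \<noteq> y"
  shows False
proof -
  have "insert x T \<inter> insert y T = T" using assms(3-) by (auto simp: nbhd_def)
  then have "diamond k E x y (insert x T) (insert y T)"
    using assms(2-) by (auto simp: diamond_def nbhd_def)
  then show False using assms(1,5,6) by (auto simp: has_AB_diamond_def)
qed

lemma nbhd_subset_side:
  assumes "kgraph k V E" and "A \<union> B = V" and "\<not> has_AB_diamond k E A B"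
    and "card T = k - 1" and "u \<in> nbhd E T" and "u \<in> A"
  shows "nbhd E T \<subseteq> A"
proof
  fix w assume w: "w \<in> nbhd E T"
  show "w \<in> A"
  proof (rule ccontr)
    assume "w \<notin> A"
    then have "w \<in> B" using w nbhd_subset[OF assms(1)] assms(2) by blast
    then show False using nbhd_not_mixed[OF assms(3,4,5) w \<open>u \<in> A\<close>] \<open>w \<notin> A\<close> assms(6) by blast
  qed
qed

lemma is_AB_proto_balancer_intro:
  assumes kg: "kgraph k V E" and "card S = k - 3" and "A \<inter> B = {}"
    and "a \<in> A" "a' \<in> A" "a \<noteq> a'" "a \<notin> S" "a' \<notin> S"
    and "b1 \<in> B" "b2 \<in> B" "v \<in> B" "b1 \<noteq> b2"
    and b1: "b1 \<in> nbhd E (insert a (insert a' S))"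
    and b2: "b2 \<in> nbhd E (insert a (insert a' S))"
    and v: "v \<in> nbhd E (insert b2 (insert b1 S))"
  shows "is_AB_proto_balancer k V E A S {a, a', b1} {a, a', b2} {b1, b2, v}"
proof -
  have "S \<subseteq> V" using insert_nbhd_subset[OF kg b1] by blast
  have edges: "S \<union> {a, a', b1} \<in> E" "S \<union> {a, a', b2} \<in> E" "S \<union> {b1, b2, v} \<in> E"
    using b1 b2 v by (auto simp: nbhd_def insert_commute)
  have in_V: "{a, a', b1} \<subseteq> V" "{a, a', b2} \<subseteq> V" "{b1, b2, v} \<subseteq> V"
    using insert_nbhd_subset[OF kg b1] insert_nbhd_subset[OF kg b2] insert_nbhd_subset[OF kg v]
    by auto
  have "b1 \<notin> A" "b2 \<notin> A" "v \<notin> A" using assms(3,9-11) by auto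
  with assms(4-8,12) b1 b2 v show ?thesis
    using \<open>S \<subseteq> V\<close> \<open>card S = k - 3\<close> edges in_V
    unfolding is_AB_proto_balancer_def nbhd_def by (auto simp: Int_insert_left Int_insert_right)
qed

locale diamond_free_bipartition =
  fixes k n :: nat and V A B :: "'a set" and E :: "'a set set"
  assumes k_ge_3: "k \<ge> 3" and kgraph: "kgraph k V E" and card_V: "card V = n"
    and codeg: "real (min_codeg k V E) > real n / 3"
    and cover: "A \<union> B = V" and disjoint: "A \<inter> B = {}"
    and no_diamond: "\<not> has_AB_diamond k E A B"
begin

lemma swap: "diamond_free_bipartition k n V B A E"
  using k_ge_3 kgraph card_V codeg cover disjoint no_diamond has_AB_diamond_commute
  by unfold_locales blast+

lemma nbhd_subset_A: "card T = k - 1 \<Longrightarrow> u \<in> nbhd E T \<Longrightarrow> u \<in> A \<Longrightarrow> nbhd E T \<subseteq> A"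
  using kgraph cover no_diamond by (rule nbhd_subset_side)

lemma nbhd_subset_B: "card T = k - 1 \<Longrightarrow> u \<in> nbhd E T \<Longrightarrow> u \<in> B \<Longrightarrow> nbhd E T \<subseteq> B"
  by (rule diamond_free_bipartition.nbhd_subset_A[OF swap])

lemma card_nbhd_gt:
  assumes "T \<subseteq> V" and "card T = k - 1"
  shows "real (card (nbhd E T)) > real n / 3"
proof -
  have "min_codeg k V E \<le> card (nbhd E T)"
    using min_codeg_le_card_nbhd[OF kgraph assms] k_ge_3 by simp
  then show ?thesis using codeg by linarith
qed

lemma nbhd_nonempty:
  assumes "T \<subseteq> V" and "card T = k - 1"
  shows "nbhd E T \<noteq> {}"
proof -
  have "real n / 3 \<ge> 0" by simp
  then have "card (nbhd E T) \<noteq> 0" using card_nbhd_gt[OF assms] by linarith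
  then show ?thesis by auto
qed

lemma nbhd_other_vertex:
  assumes card_T: "card T = k - 1" and x: "x \<in> nbhd E T"
  obtains y where "y \<in> nbhd E T" "y \<noteq> x"
proof -
  have "finite V" using kgraph by (simp add: kgraph_def)
  have xT_V: "insert x T \<subseteq> V" using insert_nbhd_subset[OF kgraph x] .
  then have "finite T" using finite_subset[OF xT_V \<open>finite V\<close>] by simp
  have "card (insert x T) \<le> n" using card_mono[OF \<open>finite V\<close> xT_V] card_V by simp
  moreover have "x \<notin> T" using x by (simp add: nbhd_def)
  ultimately have "real n \<ge> 3" using \<open>finite T\<close> card_T k_ge_3 by simp
  then have gt: "real (card (nbhd E T)) > 1"
    using card_nbhd_gt[OF _ card_T] xT_V by fastforce
  have "\<not> nbhd E T \<subseteq> {x}"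
  proof
    assume "nbhd E T \<subseteq> {x}"
    then have "card (nbhd E T) \<le> card {x}" by (intro card_mono) auto
    then show False using gt by simp
  qed
  then show ?thesis using that by blast
qed

lemma nbhd_of_B_pair_in_B:
  assumes S: "finite S" "card S = k - 3" "a \<notin> S" "b1 \<notin> S" "b2 \<notin> S"
    and "a \<in> A" "a' \<in> A" "b1 \<in> B" "b2 \<in> B" "b1 \<noteq> b2"
    and a': "a' \<in> nbhd E (insert a (insert b1 S))"
    and v: "v \<in> nbhd E (insert b2 (insert b1 S))"
  shows "v \<in> B"
proof (rule ccontr)
  assume "v \<notin> B"
  then have "v \<in> A" using insert_nbhd_subset[OF kgraph v] cover by blast
  define TP TQ TR where "TP = insert a (insert b1 S)" and "TQ = insert b2 (insert b1 S)"
    and "TR = insert v (insert b1 S)"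
  have "a \<noteq> b1" "v \<notin> insert b1 S" using \<open>a \<in> A\<close> \<open>b1 \<in> B\<close> disjoint v by (auto simp: nbhd_def)
  then have card_T: "card TP = k - 1" "card TQ = k - 1" "card TR = k - 1"
    using S \<open>b1 \<noteq> b2\<close> k_ge_3 by (simp_all add: TP_def TQ_def TR_def)
  have "b2 \<in> nbhd E TR"
    using nbhd_swap[of b2 "insert b1 S" v E] v S(5) \<open>b1 \<noteq> b2\<close> by (simp add: TR_def)
  have "nbhd E TP \<subseteq> A"
    using nbhd_subset_A[OF card_T(1) a'[folded TP_def] \<open>a' \<in> A\<close>] .
  moreover have "nbhd E TQ \<subseteq> A"
    using nbhd_subset_A[OF card_T(2) v[folded TQ_def] \<open>v \<in> A\<close>] .
  moreover have "nbhd E TR \<subseteq> B"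
    using nbhd_subset_B[OF card_T(3) \<open>b2 \<in> nbhd E TR\<close> \<open>b2 \<in> B\<close>] .
  ultimately have PR: "nbhd E TP \<inter> nbhd E TR = {}" and QR: "nbhd E TQ \<inter> nbhd E TR = {}"
    using disjoint by blast+
  have PQ: "nbhd E TP \<inter> nbhd E TQ = {}"
  proof (rule equals0I)
    fix y assume "y \<in> nbhd E TP \<inter> nbhd E TQ"
    then have y: "y \<in> nbhd E TP" "y \<in> nbhd E TQ" by auto
    then have "y \<notin> insert b1 S" by (auto simp: TP_def nbhd_def)
    have "a \<in> nbhd E (insert y (insert b1 S))"
      using nbhd_swap[of a "insert b1 S" y E] y(1) \<open>a \<noteq> b1\<close> S(3) by (simp add: TP_def)
    moreover have "b2 \<in> nbhd E (insert y (insert b1 S))"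
      using nbhd_swap[of b2 "insert b1 S" y E] y(2) \<open>b1 \<noteq> b2\<close> S(5) by (simp add: TQ_def)
    moreover have "card (insert y (insert b1 S)) = k - 1"
      using S \<open>y \<notin> insert b1 S\<close> k_ge_3 by simp
    moreover have "a \<noteq> b2" using \<open>a \<in> A\<close> \<open>b2 \<in> B\<close> disjoint by blast
    ultimately show False
      using nbhd_not_mixed[OF no_diamond _ _ _ \<open>a \<in> A\<close> \<open>b2 \<in> B\<close>] by blast
  qed
  have "TP \<subseteq> V" "TQ \<subseteq> V" "TR \<subseteq> V"
    using insert_nbhd_subset[OF kgraph a'] insert_nbhd_subset[OF kgraph v]
      insert_nbhd_subset[OF kgraph \<open>b2 \<in> nbhd E TR\<close>]
    by (auto simp: TP_def TQ_def)
  with card_T show False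
    using not_three_disjoint_nbhds[OF kgraph _ card_V codeg _ PQ PR QR] k_ge_3 by simp
qed

lemma proto_balancer_from_nbhd:
  assumes S: "card S = k - 3" "a \<notin> S" "a' \<notin> S"
    and "a \<in> A" "a' \<in> A" "a \<noteq> a'" "b1 \<in> B"
    and b1: "b1 \<in> nbhd E (insert a (insert a' S))"
  shows "\<exists>X1 X2 X3. is_AB_proto_balancer k V E A S X1 X2 X3"
proof -
  have "finite V" using kgraph by (simp add: kgraph_def)
  have ab1_V: "insert b1 (insert a (insert a' S)) \<subseteq> V" using insert_nbhd_subset[OF kgraph b1] .
  then have "finite S" using finite_subset[OF ab1_V \<open>finite V\<close>] by simp
  have card_T0: "card (insert a (insert a' S)) = k - 1" using S \<open>finite S\<close> \<open>a \<noteq> a'\<close> k_ge_3 by simp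
  obtain b2 where b2: "b2 \<in> nbhd E (insert a (insert a' S))" "b2 \<noteq> b1"
    using nbhd_other_vertex[OF card_T0 b1] by blast
  have "b2 \<in> B" using nbhd_subset_B[OF card_T0 b1 \<open>b1 \<in> B\<close>] b2(1) by blast
  have "b1 \<notin> S" "b2 \<notin> S" using b1 b2 by (auto simp: nbhd_def)
  define T1 where "T1 = insert b2 (insert b1 S)"
  have "card T1 = k - 1" using \<open>finite S\<close> S b2 \<open>b1 \<notin> S\<close> \<open>b2 \<notin> S\<close> k_ge_3 by (simp add: T1_def)
  moreover have "T1 \<subseteq> V" using ab1_V insert_nbhd_subset[OF kgraph b2(1)] by (auto simp: T1_def)
  ultimately obtain v where v: "v \<in> nbhd E T1" using nbhd_nonempty by blast
  have b1': "b1 \<in> nbhd E (insert a' (insert a S))" using b1 by (simp add: insert_commute)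
  have "a' \<in> nbhd E (insert b1 (insert a S))" using nbhd_swap[OF _ b1'] S(3) \<open>a \<noteq> a'\<close> by simp
  then have a'_nbhd: "a' \<in> nbhd E (insert a (insert b1 S))" by (simp add: insert_commute)
  have "v \<in> B"
    using nbhd_of_B_pair_in_B[OF \<open>finite S\<close> S(1,2) \<open>b1 \<notin> S\<close> \<open>b2 \<notin> S\<close> \<open>a \<in> A\<close> \<open>a' \<in> A\<close>
        \<open>b1 \<in> B\<close> \<open>b2 \<in> B\<close> b2(2)[symmetric] a'_nbhd v[unfolded T1_def]] .
  then show ?thesis
    using is_AB_proto_balancer_intro[OF kgraph S(1) disjoint \<open>a \<in> A\<close> \<open>a' \<in> A\<close> \<open>a \<noteq> a'\<close> S(2,3)
        \<open>b1 \<in> B\<close> \<open>b2 \<in> B\<close> _ b2(2)[symmetric] b1 b2(1) v[unfolded T1_def]]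
    by blast
qed

lemma proto_balancer_from_mixed_nbhd:
  assumes "card R = k - 3" "a \<notin> R" "b \<notin> R" "a \<in> A" "b \<in> B"
    and v: "v \<in> nbhd E (insert a (insert b R))" and "v \<in> A"
  shows "\<exists>X1 X2 X3. is_AB_proto_balancer k V E A R X1 X2 X3"
proof -
  have "v \<notin> R" "v \<noteq> a" "a \<noteq> b" using v assms(4,5) disjoint by (auto simp: nbhd_def)
  have "v \<in> nbhd E (insert b (insert a R))" using v by (simp add: insert_commute)
  then have "b \<in> nbhd E (insert v (insert a R))"
    using nbhd_swap \<open>b \<notin> R\<close> \<open>a \<noteq> b\<close> by (metis insertE)
  then show ?thesis
    by (rule proto_balancer_from_nbhd[OF assms(1) \<open>v \<notin> R\<close> assms(2) \<open>v \<in> A\<close> assms(4) \<open>v \<noteq> a\<close> assms(5)])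
qed

end

theorem lemma7p4:
  fixes k n :: nat and V A B :: "'a set" and E :: "'a set set"
  assumes "k \<ge> 3" and "n \<ge> 2 * k - 4"
    and "kgraph k V E" and "card V = n"
    and "real (min_codeg k V E) > real n / 3"
    and "A \<union> B = V" and "A \<inter> B = {}" and "card A > 0" and "card B > 0"
    and "\<not> has_AB_diamond k E A B"
  shows "has_proto_balancer k V E A B"
proof -
  interpret AB: diamond_free_bipartition k n V A B E using assms by unfold_locales
  interpret BA: diamond_free_bipartition k n V B A E by (rule AB.swap)
  obtain a b where "a \<in> A" "b \<in> B" using assms(8,9) by (metis card_gt_0_iff ex_in_conv)
  then have "a \<noteq> b" "a \<in> V" "b \<in> V" using assms(6,7) by auto
  have "finite V" using assms(3) by (simp add: kgraph_def)
  \<comment> \<open>The only use of n \<ge> 2k - 4: it makes room for a (k-1)-set through a and b.\<close>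
  have "k - 3 \<le> card (V - {a, b})"
    using assms(1,2,4) \<open>finite V\<close> \<open>a \<noteq> b\<close> \<open>a \<in> V\<close> \<open>b \<in> V\<close> by simp
  then obtain R where R: "R \<subseteq> V - {a, b}" "card R = k - 3" by (meson obtain_subset_with_card_n)
  then have "finite R" "a \<notin> R" "b \<notin> R" using \<open>finite V\<close> finite_subset by auto
  then have "card (insert a (insert b R)) = k - 1" using R(2) \<open>a \<noteq> b\<close> assms(1) by simp
  moreover have "insert a (insert b R) \<subseteq> V" using R \<open>a \<in> V\<close> \<open>b \<in> V\<close> by blast
  ultimately obtain v where v: "v \<in> nbhd E (insert a (insert b R))" using AB.nbhd_nonempty by blast
  then have v': "v \<in> nbhd E (insert b (insert a R))" by (simp add: insert_commute)
  have "v \<in> A \<or> v \<in> B" using insert_nbhd_subset[OF assms(3) v] assms(6) by blast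
  then show ?thesis
    using AB.proto_balancer_from_mixed_nbhd[OF R(2) \<open>a \<notin> R\<close> \<open>b \<notin> R\<close> \<open>a \<in> A\<close> \<open>b \<in> B\<close> v]
      BA.proto_balancer_from_mixed_nbhd[OF R(2) \<open>b \<notin> R\<close> \<open>a \<notin> R\<close> \<open>b \<in> B\<close> \<open>a \<in> A\<close> v']
    unfolding has_proto_balancer_def by blast
qed

end
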